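(* Fix a context $x$, a finite response set $\mathcal Y(x)$, a distribution $\pi_{\mathrm{old}}(\cdot\mid x)$ on $\mathcal Y(x)$, a function $A(x,\cdot):\mathcal Y(x)\to\mathbb R$, and $\beta>0$. For $\tau>0$ define the Lambert mass function \[ M_A(\tau)=\mathbb E_{y\sim\pi_{\mathrm{old}}(\cdot\mid x)}\left[\frac{1}{\tau}W_0\!\left(\tau\exp\!\left(\frac{A(x,y)}{\beta}\right)\right)\right]. \] Suppose $\tau_s>0$ satisfies $M_A(\tau_s)=1$. If $\mathbb E_{y\sim\pi_{\mathrm{old}}(\cdot\mid x)}[A(x,y)]\ge\beta$, then $\tau_s\ge1$. Consequently: (i) for any rewards $r_1,\dots,r_G\in\mathbb R$ ($G\ge 1$) with $\bar r=\frac1G\sum_j r_j$, the advantages $\widehat A_i=r_i-\bar r+\beta$ satisfy $\frac1G\sum_{i=1}^G W_0(\exp(\widehat A_i/\beta))\ge1$, so that any $\widehat\tau>0$ with $\frac1G\sum_{i=1}^G\frac{1}{\widehat\tau}W_0(\widehat\tau\exp(\widehat A_i/\beta))=1$ satisfies $\widehat\tau\ge1$; and (ii) if $r:\mathcal Y(x)\to\mathbb R$ is a reward, $V_{\mathrm{old}}(x)=\mathbb E_{y\sim\pi_{\mathrm{old}}}[r(y)]$, and $A_G(x,y)=\frac{G-1}{G}(r(y)-V_{\mathrm{old}}(x))+\beta$ (which equals $\mathbb E[r_i-\bar r+\beta\mid y_i=y]$ when $y_1,\dots,y_G$ are i.i.d. from $\pi_{\mathrm{old}}(\cdot\mid x)$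 and $r_j=r(y_j)$), then any $\tau_s>0$ with $M_{A_G}(\tau_s)=1$ satisfies $\tau_s\ge1$.
   Context: $W_0$ denotes the principal branch of the Lambert $W$ function, i.e. the inverse of $w\mapsto we^w$ on $[-1,\infty)$, satisfying $W_0(z)e^{W_0(z)}=z$. $\tau_s$ is called the Lambert normalization multiplier; the Lambert target is $\pi^\star(y\mid x)=\frac{\pi_{\mathrm{old}}(y\mid x)}{\tau_s}W_0(\tau_s e^{A(x,y)/\beta})$. *)

theory Defs
  imports Complex_Main
begin

text \<open>Principal branch of the Lambert W function: the inverse of w \<mapsto> w e^w on [-1,\<infinity>).
  (Only meaningful for z \<ge> -1/e; all arguments used below are positive.)\<close>
definition lambertW0 :: "real \<Rightarrow> real" where
  "lambertW0 z = (THE w. w \<ge> -1 \<and> w * exp w = z)"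

definition lambert_mass :: "'a set \<Rightarrow> ('a \<Rightarrow> real) \<Rightarrow> ('a \<Rightarrow> real) \<Rightarrow> real \<Rightarrow> real \<Rightarrow> real" where
  "lambert_mass Y p A \<beta> \<tau> = (\<Sum>y\<in>Y. p y * (lambertW0 (\<tau> * exp (A y / \<beta>)) / \<tau>))"

end

theory Submission
  imports Defs
begin

text \<open>On positive arguments \<open>W\<^sub>0\<close> is increasing and \<open>W\<^sub>0 z / z = exp (- W\<^sub>0 z)\<close> is
  decreasing, so every summand \<open>W\<^sub>0 (\<tau> e\<^sup>a) / \<tau>\<close> of the Lambert mass, and hence the mass itself,
  strictly decreases in \<open>\<tau>\<close>. It therefore suffices to show that the mass at \<open>\<tau> = 1\<close> is at
  least 1. From \<open>ln w + w = a\<close> for \<open>w = W\<^sub>0 (e\<^sup>a)\<close> and \<open>ln w \<le> w - 1\<close> one gets the affine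
  bound \<open>W\<^sub>0 (e\<^sup>a) \<ge> (1 + a) / 2\<close>, whose expectation is at least 1 as soon as
  \<open>E[A] \<ge> \<beta>\<close>. Both advantage estimators have mean exactly \<open>\<beta>\<close>.\<close>

lemma mult_exp_strict_mono:
  fixes v w :: real
  assumes "0 \<le> v" "v < w"
  shows "v * exp v < w * exp w"
  using assms by (intro mult_strict_mono) auto

lemma lambertW0_mult_exp:
  fixes w :: real
  assumes "0 \<le> w"
  shows "lambertW0 (w * exp w) = w"
  unfolding lambertW0_def
proof (rule the_equality)
  show "w \<ge> -1 \<and> w * exp w = w * exp w" using assms by simp
next
  fix v :: real
  assume v: "v \<ge> -1 \<and> v * exp v = w * exp w"
  show "v = w"
  proof (cases "v \<le> 0")
    case True
    then have "v * exp v \<le> 0" by (simp add: mult_nonpos_nonneg)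
    moreover have "w * exp w \<ge> 0" using assms by simp
    ultimately have "w = 0" "v * exp v = 0" using v assms by auto
    then show ?thesis by simp
  next
    case False
    then show ?thesis
      using v assms mult_exp_strict_mono[of v w] mult_exp_strict_mono[of w v]
      by (cases v w rule: linorder_cases) auto
  qed
qed

lemma mult_exp_surj_pos:
  fixes z :: real
  assumes "0 < z"
  obtains w where "0 < w" "w * exp w = z"
proof -
  have "\<exists>w\<ge>0. w \<le> z \<and> w * exp w = z"
  proof (rule IVT)
    show "z \<le> z * exp z" using assms by simp
    show "\<forall>x. 0 \<le> x \<and> x \<le> z \<longrightarrow> isCont (\<lambda>w. w * exp w) x"
      by (auto intro!: continuous_intros)
  qed (use assms in auto)
  then obtain w where w: "0 \<le> w" "w * exp w = z" by blast
  moreover from w have "0 < w" using assms by (cases "w = 0") auto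
  ultimately show ?thesis using that by blast
qed

lemma lambertW0_pos:
  fixes z :: real
  assumes "0 < z"
  shows "0 < lambertW0 z"
  using assms by (metis less_imp_le lambertW0_mult_exp mult_exp_surj_pos)

lemma lambertW0_mult_exp_self:
  fixes z :: real
  assumes "0 < z"
  shows "lambertW0 z * exp (lambertW0 z) = z"
  using assms by (metis less_imp_le lambertW0_mult_exp mult_exp_surj_pos)

lemma lambertW0_strict_mono:
  fixes z1 z2 :: real
  assumes "0 < z1" "z1 < z2"
  shows "lambertW0 z1 < lambertW0 z2"
proof (rule ccontr)
  assume "\<not> ?thesis"
  then have "lambertW0 z2 * exp (lambertW0 z2) \<le> lambertW0 z1 * exp (lambertW0 z1)"
    using lambertW0_pos[of z2] assms by (intro mult_mono) auto
  then show False using lambertW0_mult_exp_self[of z1] lambertW0_mult_exp_self[of z2] assms by simp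
qed

lemma lambertW0_div_self:
  fixes z :: real
  assumes "0 < z"
  shows "lambertW0 z / z = exp (- lambertW0 z)"
  using lambertW0_mult_exp_self[OF assms] assms by (auto simp: field_simps exp_minus)

lemma lambertW0_div_self_strict_antimono:
  fixes z1 z2 :: real
  assumes "0 < z1" "z1 < z2"
  shows "lambertW0 z2 / z2 < lambertW0 z1 / z1"
  using lambertW0_strict_mono[OF assms] assms by (simp add: lambertW0_div_self)

lemma lambertW0_scaled_strict_antimono:
  fixes \<tau>1 \<tau>2 c :: real
  assumes "0 < c" "0 < \<tau>1" "\<tau>1 < \<tau>2"
  shows "lambertW0 (\<tau>2 * c) / \<tau>2 < lambertW0 (\<tau>1 * c) / \<tau>1"
proof -
  have "lambertW0 (\<tau>2 * c) / (\<tau>2 * c) < lambertW0 (\<tau>1 * c) / (\<tau>1 * c)"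
    using assms by (intro lambertW0_div_self_strict_antimono) auto
  then show ?thesis using assms by (simp add: field_simps)
qed

lemma lambertW0_exp_ge:
  fixes a :: real
  shows "(1 + a) / 2 \<le> lambertW0 (exp a)"
proof -
  define w where "w = lambertW0 (exp a)"
  have w_pos: "0 < w" by (simp add: w_def lambertW0_pos)
  have "w * exp w = exp a" by (simp add: w_def lambertW0_mult_exp_self)
  then have "ln w + w = a" using w_pos by (metis ln_exp ln_mult_pos exp_gt_zero)
  moreover have "ln w \<le> w - 1" using w_pos by (rule ln_le_minus_one)
  ultimately show ?thesis by (simp add: w_def)
qed

lemma lambert_mass_strict_antimono:
  assumes "finite Y" "\<forall>y\<in>Y. 0 \<le> p y" "\<exists>y\<in>Y. 0 < p y" "0 < \<tau>1" "\<tau>1 < \<tau>2"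
  shows "lambert_mass Y p A \<beta> \<tau>2 < lambert_mass Y p A \<beta> \<tau>1"
  unfolding lambert_mass_def
proof (rule sum_strict_mono_ex1[OF \<open>finite Y\<close>])
  have term_less: "lambertW0 (\<tau>2 * exp (A y / \<beta>)) / \<tau>2 < lambertW0 (\<tau>1 * exp (A y / \<beta>)) / \<tau>1"
    for y using assms by (intro lambertW0_scaled_strict_antimono) auto
  show "\<forall>y\<in>Y. p y * (lambertW0 (\<tau>2 * exp (A y / \<beta>)) / \<tau>2)
           \<le> p y * (lambertW0 (\<tau>1 * exp (A y / \<beta>)) / \<tau>1)"
    using assms(2) term_less by (metis mult_left_mono less_imp_le)
  show "\<exists>y\<in>Y. p y * (lambertW0 (\<tau>2 * exp (A y / \<beta>)) / \<tau>2)
           < p y * (lambertW0 (\<tau>1 * exp (A y / \<beta>)) / \<tau>1)"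
    using assms(3) term_less by (metis mult_strict_left_mono)
qed

lemma lambert_mass_one_ge_one:
  assumes "\<forall>y\<in>Y. 0 \<le> p y" "(\<Sum>y\<in>Y. p y) = 1" "0 < \<beta>" "\<beta> \<le> (\<Sum>y\<in>Y. p y * A y)"
  shows "1 \<le> lambert_mass Y p A \<beta> 1"
proof -
  have "1 \<le> ((\<Sum>y\<in>Y. p y) + (\<Sum>y\<in>Y. p y * A y) / \<beta>) / 2"
    using assms by (simp add: field_simps)
  also have "\<dots> = (\<Sum>y\<in>Y. p y * ((1 + A y / \<beta>) / 2))"
    by (simp add: distrib_left add_divide_distrib sum.distrib sum_divide_distrib)
  also have "\<dots> \<le> (\<Sum>y\<in>Y. p y * lambertW0 (exp (A y / \<beta>)))"
    using assms(1) by (intro sum_mono mult_left_mono lambertW0_exp_ge) auto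
  finally show ?thesis by (simp add: lambert_mass_def)
qed

lemma lambert_normalizer_ge_one:
  assumes "finite Y" "\<forall>y\<in>Y. 0 \<le> p y" "(\<Sum>y\<in>Y. p y) = 1" "0 < \<beta>"
    and "\<beta> \<le> (\<Sum>y\<in>Y. p y * A y)" "0 < \<tau>" "lambert_mass Y p A \<beta> \<tau> = 1"
  shows "1 \<le> \<tau>"
proof (rule ccontr)
  assume "\<not> 1 \<le> \<tau>"
  moreover have "\<exists>y\<in>Y. 0 < p y"
    using assms(2,3) by (metis less_eq_real_def sum.neutral zero_neq_one)
  ultimately have "lambert_mass Y p A \<beta> 1 < lambert_mass Y p A \<beta> \<tau>"
    using assms by (intro lambert_mass_strict_antimono) auto
  then show False using lambert_mass_one_ge_one[of Y p \<beta> A] assms by simp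
qed

lemma sum_mult_centered_shift:
  fixes p r :: "'a \<Rightarrow> real"
  assumes "(\<Sum>y\<in>Y. p y) = 1"
  shows "(\<Sum>y\<in>Y. p y * (c * (r y - (\<Sum>y\<in>Y. p y * r y)) + b)) = b"
proof -
  define V where "V = (\<Sum>y\<in>Y. p y * r y)"
  have "(\<Sum>y\<in>Y. p y * (c * (r y - V) + b))
      = c * (\<Sum>y\<in>Y. p y * r y) - c * V * (\<Sum>y\<in>Y. p y) + b * (\<Sum>y\<in>Y. p y)"
    by (simp add: algebra_simps sum.distrib sum_subtractf sum_distrib_left)
  then show ?thesis using assms by (simp add: V_def)
qed

lemma lambert_mass_uniform:
  "lambert_mass I (\<lambda>_. 1 / real (card I)) A \<beta> \<tau>
     = (\<Sum>i\<in>I. lambertW0 (\<tau> * exp (A i / \<beta>)) / \<tau>) / real (card I)"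
  by (simp add: lambert_mass_def sum_divide_distrib mult.commute)

lemma centered_advantage_lambert_bounds:
  fixes r :: "'i \<Rightarrow> real"
  assumes "finite I" "I \<noteq> {}" "0 < \<beta>"
  defines "Ahat \<equiv> \<lambda>i. r i - (\<Sum>j\<in>I. r j) / real (card I) + \<beta>"
  shows "1 \<le> (\<Sum>i\<in>I. lambertW0 (exp (Ahat i / \<beta>))) / real (card I)"
    and "0 < \<tau> \<Longrightarrow> (\<Sum>i\<in>I. lambertW0 (\<tau> * exp (Ahat i / \<beta>)) / \<tau>) / real (card I) = 1
           \<Longrightarrow> 1 \<le> \<tau>"
proof -
  define q where "q = (\<lambda>_::'i. 1 / real (card I))"
  have q: "\<forall>i\<in>I. 0 \<le> q i" "(\<Sum>i\<in>I. q i) = 1"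
    using assms(1,2) by (auto simp: q_def)
  have "Ahat = (\<lambda>i. 1 * (r i - (\<Sum>j\<in>I. q j * r j)) + \<beta>)"
    by (simp add: Ahat_def q_def sum_divide_distrib)
  then have mean: "(\<Sum>i\<in>I. q i * Ahat i) = \<beta>"
    using sum_mult_centered_shift[OF q(2), of 1 r \<beta>] by simp
  have mass: "lambert_mass I q Ahat \<beta> \<tau>'
      = (\<Sum>i\<in>I. lambertW0 (\<tau>' * exp (Ahat i / \<beta>)) / \<tau>') / real (card I)" for \<tau>'
    unfolding q_def lambert_mass_uniform ..
  show "1 \<le> (\<Sum>i\<in>I. lambertW0 (exp (Ahat i / \<beta>))) / real (card I)"
    using lambert_mass_one_ge_one[OF q assms(3), of Ahat] mean mass[of 1] by simp
  show "1 \<le> \<tau>"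
    if "0 < \<tau>" "(\<Sum>i\<in>I. lambertW0 (\<tau> * exp (Ahat i / \<beta>)) / \<tau>) / real (card I) = 1"
    using lambert_normalizer_ge_one[OF assms(1) q assms(3), of Ahat] mean mass[of \<tau>] that
    by simp
qed

theorem proposition2:
  fixes Y :: "'a set" and p A :: "'a \<Rightarrow> real" and \<beta> :: real
  assumes fin: "finite Y"
    and nonneg: "\<forall>y\<in>Y. p y \<ge> 0"
    and prob: "(\<Sum>y\<in>Y. p y) = 1"
    and beta_pos: "\<beta> > 0"
  shows
    "(\<forall>\<tau>s>0. lambert_mass Y p A \<beta> \<tau>s = 1 \<longrightarrow> (\<Sum>y\<in>Y. p y * A y) \<ge> \<beta> \<longrightarrow> \<tau>s \<ge> 1)
   \<and> (\<forall>(G::nat) (r::nat \<Rightarrow> real). G \<ge> 1 \<longrightarrow>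
        (let rbar = (\<Sum>j=1..G. r j) / real G;
             Ahat = (\<lambda>i. r i - rbar + \<beta>)
         in (\<Sum>i=1..G. lambertW0 (exp (Ahat i / \<beta>))) / real G \<ge> 1
          \<and> (\<forall>\<tau>>0. (\<Sum>i=1..G. lambertW0 (\<tau> * exp (Ahat i / \<beta>)) / \<tau>) / real G = 1
                  \<longrightarrow> \<tau> \<ge> 1)))
   \<and> (\<forall>(G::nat) (r::'a \<Rightarrow> real). G \<ge> 1 \<longrightarrow>
        (let V = (\<Sum>y\<in>Y. p y * r y);
             AG = (\<lambda>y. (real G - 1) / real G * (r y - V) + \<beta>)
         in \<forall>\<tau>s>0. lambert_mass Y p AG \<beta> \<tau>s = 1 \<longrightarrow> \<tau>s \<ge> 1))"
proof (intro conjI allI impI)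
  fix \<tau>s :: real
  assume "\<tau>s > 0" "lambert_mass Y p A \<beta> \<tau>s = 1" "(\<Sum>y\<in>Y. p y * A y) \<ge> \<beta>"
  then show "\<tau>s \<ge> 1" using lambert_normalizer_ge_one assms by blast
next
  fix G :: nat and r :: "nat \<Rightarrow> real"
  assume "G \<ge> 1"
  then have "finite {1..G}" "{1..G} \<noteq> {}" "card {1..G} = G" by auto
  from centered_advantage_lambert_bounds[OF this(1,2) beta_pos, where r = r] this(3)
  show "let rbar = (\<Sum>j=1..G. r j) / real G; Ahat = (\<lambda>i. r i - rbar + \<beta>)
        in (\<Sum>i=1..G. lambertW0 (exp (Ahat i / \<beta>))) / real G \<ge> 1
          \<and> (\<forall>\<tau>>0. (\<Sum>i=1..G. lambertW0 (\<tau> * exp (Ahat i / \<beta>)) / \<tau>) / real G = 1 \<longrightarrow> \<tau> \<ge> 1)"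
    by (simp add: Let_def)
next
  fix G :: nat and r :: "'a \<Rightarrow> real"
  define AG where "AG = (\<lambda>y. (real G - 1) / real G * (r y - (\<Sum>y\<in>Y. p y * r y)) + \<beta>)"
  have "(\<Sum>y\<in>Y. p y * AG y) = \<beta>"
    unfolding AG_def by (rule sum_mult_centered_shift[OF prob])
  then show "let V = (\<Sum>y\<in>Y. p y * r y); AG = (\<lambda>y. (real G - 1) / real G * (r y - V) + \<beta>)
        in \<forall>\<tau>s>0. lambert_mass Y p AG \<beta> \<tau>s = 1 \<longrightarrow> \<tau>s \<ge> 1"
    using lambert_normalizer_ge_one[OF fin nonneg prob beta_pos, of AG]
    unfolding Let_def AG_def[symmetric] by simp
qed

end
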